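(* Let $n\ge2$, $\omega\in\mathbb{R}^n$, $k\in\mathbb{R}_{>0}^n$ satisfy (IC1) $\sum_\mu\omega_\mu=0$, (IC2) $\omega\ne0$, (IC3) $\left|\frac{\omega_1}{k_1}\right|\le\cdots\le\left|\frac{\omega_n}{k_n}\right|$. Let $\sigma\in\{-1,+1\}^n$ and $f_\sigma(R)=-R+\frac1n\sum_{\mu=1}^n\sigma_\mu\sqrt{k_\mu^2R-\omega_\mu^2}$. Then $f_\sigma$ has no positive roots if and only if $f_\sigma(R)<0$ for all $R\in\left[\left(\frac{\omega_n}{k_n}\right)^2,\infty\right)$.
   Context: Square roots are nonnegative real square roots; a positive root of $f_\sigma$ is a real $R>0$ with $k_\mu^2R-\omega_\mu^2\ge0$ for all $\mu$ and $f_\sigma(R)=0$. *)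

theory Defs
  imports Complex_Main
begin

text \<open>Vectors in R^n are represented as functions nat => real indexed by {1..n}.\<close>

definition f_sigma :: "nat \<Rightarrow> (nat \<Rightarrow> real) \<Rightarrow> (nat \<Rightarrow> real) \<Rightarrow> (nat \<Rightarrow> real) \<Rightarrow> real \<Rightarrow> real" where
  "f_sigma n \<sigma> k \<omega> R = - R + (1 / real n) * (\<Sum>\<mu>=1..n. \<sigma> \<mu> * sqrt ((k \<mu>)\<^sup>2 * R - (\<omega> \<mu>)\<^sup>2))"

definition positive_root :: "nat \<Rightarrow> (nat \<Rightarrow> real) \<Rightarrow> (nat \<Rightarrow> real) \<Rightarrow> (nat \<Rightarrow> real) \<Rightarrow> real \<Rightarrow> bool" where
  "positive_root n \<sigma> k \<omega> R \<longleftrightarrow> R > 0 \<and> (\<forall>\<mu>\<in>{1..n}. (k \<mu>)\<^sup>2 * R - (\<omega> \<mu>)\<^sup>2 \<ge> 0) \<and> f_sigma n \<sigma> k \<omega> R = 0"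

end

theory Submission
  imports Defs
begin

text \<open>Under (IC3) every radicand of \<open>f_sigma\<close> is nonnegative exactly when \<open>R \<ge> (\<omega>\<^sub>n/k\<^sub>n)\<^sup>2\<close>,
  and (IC2) makes this threshold positive, so the positive roots are precisely the zeros
  of \<open>f_sigma\<close> on \<open>[(\<omega>\<^sub>n/k\<^sub>n)\<^sup>2, \<infinity>)\<close>. There \<open>f_sigma\<close> is continuous and bounded above by
  \<open>-R + c \<surd>R\<close> with \<open>c = (\<Sum>k\<^sub>\<mu>)/n\<close>, hence negative for large \<open>R\<close>; by the intermediate value
  theorem it has no zero on the half-line iff it is negative throughout.\<close>

lemma radicand_nonneg_iff:
  fixes k w R :: real
  assumes "k > 0"
  shows "0 \<le> k\<^sup>2 * R - w\<^sup>2 \<longleftrightarrow> (w / k)\<^sup>2 \<le> R"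
  using assms by (simp add: power_divide pos_divide_le_eq algebra_simps)

lemma radicands_nonneg_iff:
  fixes k \<omega> :: "nat \<Rightarrow> real"
  assumes "1 \<le> n" and "\<forall>\<mu>\<in>{1..n}. k \<mu> > 0"
    and "\<forall>\<mu>\<in>{1..n}. \<bar>\<omega> \<mu> / k \<mu>\<bar> \<le> \<bar>\<omega> n / k n\<bar>"
  shows "(\<forall>\<mu>\<in>{1..n}. 0 \<le> (k \<mu>)\<^sup>2 * R - (\<omega> \<mu>)\<^sup>2) \<longleftrightarrow> (\<omega> n / k n)\<^sup>2 \<le> R"
proof
  assume "\<forall>\<mu>\<in>{1..n}. 0 \<le> (k \<mu>)\<^sup>2 * R - (\<omega> \<mu>)\<^sup>2"
  then show "(\<omega> n / k n)\<^sup>2 \<le> R"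
    using assms(1,2) radicand_nonneg_iff[of "k n" R "\<omega> n"] by auto
next
  assume R: "(\<omega> n / k n)\<^sup>2 \<le> R"
  show "\<forall>\<mu>\<in>{1..n}. 0 \<le> (k \<mu>)\<^sup>2 * R - (\<omega> \<mu>)\<^sup>2"
  proof
    fix \<mu> assume \<mu>: "\<mu> \<in> {1..n}"
    have "(\<omega> \<mu> / k \<mu>)\<^sup>2 \<le> (\<omega> n / k n)\<^sup>2"
      using assms(3) \<mu> by (metis abs_ge_zero power2_abs power_mono)
    then show "0 \<le> (k \<mu>)\<^sup>2 * R - (\<omega> \<mu>)\<^sup>2"
      using radicand_nonneg_iff assms(2) \<mu> R by force
  qed
qed

lemma positive_root_iff:
  fixes k \<omega> :: "nat \<Rightarrow> real"
  assumes "1 \<le> n" and "\<forall>\<mu>\<in>{1..n}. k \<mu> > 0" and "\<omega> n \<noteq> 0"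
    and "\<forall>\<mu>\<in>{1..n}. \<bar>\<omega> \<mu> / k \<mu>\<bar> \<le> \<bar>\<omega> n / k n\<bar>"
  shows "positive_root n \<sigma> k \<omega> R \<longleftrightarrow> (\<omega> n / k n)\<^sup>2 \<le> R \<and> f_sigma n \<sigma> k \<omega> R = 0"
proof -
  have "0 < (\<omega> n / k n)\<^sup>2"
    using assms(1-3) by force
  then show ?thesis
    using radicands_nonneg_iff[OF assms(1,2,4), of R] unfolding positive_root_def
    by (meson less_le_trans order.strict_implies_order)
qed

lemma f_sigma_le_sqrt_bound:
  fixes k \<omega> :: "nat \<Rightarrow> real"
  assumes "\<forall>\<mu>\<in>{1..n}. k \<mu> > 0" and "\<forall>\<mu>\<in>{1..n}. \<sigma> \<mu> \<in> {-1, 1}"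
    and "\<forall>\<mu>\<in>{1..n}. 0 \<le> (k \<mu>)\<^sup>2 * R - (\<omega> \<mu>)\<^sup>2"
  shows "f_sigma n \<sigma> k \<omega> R \<le> - R + (\<Sum>\<mu>=1..n. k \<mu>) / real n * sqrt R"
proof -
  have term_le: "\<sigma> \<mu> * sqrt ((k \<mu>)\<^sup>2 * R - (\<omega> \<mu>)\<^sup>2) \<le> k \<mu> * sqrt R" if \<mu>: "\<mu> \<in> {1..n}" for \<mu>
  proof -
    have "\<sigma> \<mu> \<le> 1"
      using bspec[OF assms(2) \<mu>] by auto
    moreover have "0 \<le> sqrt ((k \<mu>)\<^sup>2 * R - (\<omega> \<mu>)\<^sup>2)"
      using assms(3) \<mu> by simp
    ultimately have "\<sigma> \<mu> * sqrt ((k \<mu>)\<^sup>2 * R - (\<omega> \<mu>)\<^sup>2) \<le> sqrt ((k \<mu>)\<^sup>2 * R - (\<omega> \<mu>)\<^sup>2)"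
      using mult_right_mono by fastforce
    also have "\<dots> \<le> sqrt ((k \<mu>)\<^sup>2 * R)"
      by simp
    also have "\<dots> = k \<mu> * sqrt R"
      using bspec[OF assms(1) \<mu>] by (simp add: real_sqrt_mult)
    finally show ?thesis .
  qed
  have "(\<Sum>\<mu>=1..n. \<sigma> \<mu> * sqrt ((k \<mu>)\<^sup>2 * R - (\<omega> \<mu>)\<^sup>2)) \<le> (\<Sum>\<mu>=1..n. k \<mu>) * sqrt R"
    unfolding sum_distrib_right using term_le by (rule sum_mono)
  then show ?thesis
    unfolding f_sigma_def by (simp add: divide_right_mono)
qed

lemma mult_sqrt_less_self:
  fixes c R :: real
  assumes "c\<^sup>2 < R"
  shows "c * sqrt R < R"
proof -
  have "0 < R"
    using assms by (smt (verit) zero_le_power2)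
  have "c < sqrt R"
    using real_sqrt_less_mono[OF assms] by simp
  then have "c * sqrt R < sqrt R * sqrt R"
    using \<open>0 < R\<close> by (intro mult_strict_right_mono) auto
  then show ?thesis
    using \<open>0 < R\<close> by simp
qed

lemma f_sigma_eventually_negative:
  fixes k \<omega> :: "nat \<Rightarrow> real"
  assumes "\<forall>\<mu>\<in>{1..n}. k \<mu> > 0" and "\<forall>\<mu>\<in>{1..n}. \<sigma> \<mu> \<in> {-1, 1}" and "0 \<le> R\<^sub>0"
    and "\<And>R. R\<^sub>0 \<le> R \<Longrightarrow> \<forall>\<mu>\<in>{1..n}. 0 \<le> (k \<mu>)\<^sup>2 * R - (\<omega> \<mu>)\<^sup>2"
  shows "\<exists>R\<ge>R\<^sub>0. f_sigma n \<sigma> k \<omega> R < 0"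
proof -
  define c where "c = (\<Sum>\<mu>=1..n. k \<mu>) / real n"
  define R where "R = R\<^sub>0 + c\<^sup>2 + 1"
  have "R\<^sub>0 \<le> R"
    by (simp add: R_def add_increasing2)
  then have "f_sigma n \<sigma> k \<omega> R \<le> - R + c * sqrt R"
    unfolding c_def by (intro f_sigma_le_sqrt_bound[OF assms(1,2) assms(4)])
  moreover have "c * sqrt R < R"
    using assms(3) unfolding R_def by (intro mult_sqrt_less_self) linarith
  ultimately show ?thesis
    using \<open>R\<^sub>0 \<le> R\<close> by (intro exI[of _ R]) auto
qed

lemma continuous_on_f_sigma: "continuous_on A (f_sigma n \<sigma> k \<omega>)"
  unfolding f_sigma_def by (intro continuous_intros)

theorem lemma1:
  fixes n :: nat and \<omega> k \<sigma> :: "nat \<Rightarrow> real"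
  assumes n2: "n \<ge> 2"
    and kpos: "\<forall>\<mu>\<in>{1..n}. k \<mu> > 0"
    and IC1: "(\<Sum>\<mu>=1..n. \<omega> \<mu>) = 0"
    and IC2: "\<exists>\<mu>\<in>{1..n}. \<omega> \<mu> \<noteq> 0"
    and IC3: "\<forall>i\<in>{1..n}. \<forall>j\<in>{1..n}. i \<le> j \<longrightarrow> \<bar>\<omega> i / k i\<bar> \<le> \<bar>\<omega> j / k j\<bar>"
    and sig: "\<forall>\<mu>\<in>{1..n}. \<sigma> \<mu> \<in> {-1, 1}"
  shows "(\<not> (\<exists>R. positive_root n \<sigma> k \<omega> R)) \<longleftrightarrow>
         (\<forall>R. R \<ge> (\<omega> n / k n)\<^sup>2 \<longrightarrow> f_sigma n \<sigma> k \<omega> R < 0)"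
proof -
  let ?f = "f_sigma n \<sigma> k \<omega>" and ?m = "(\<omega> n / k n)\<^sup>2"
  have n: "1 \<le> n" using n2 by simp
  have ratio_le: "\<forall>\<mu>\<in>{1..n}. \<bar>\<omega> \<mu> / k \<mu>\<bar> \<le> \<bar>\<omega> n / k n\<bar>" using IC3 n by auto
  have "\<omega> n \<noteq> 0"
    using IC2 ratio_le kpos by fastforce
  note roots = positive_root_iff[OF n kpos this ratio_le]
  have radicands: "\<forall>\<mu>\<in>{1..n}. 0 \<le> (k \<mu>)\<^sup>2 * R - (\<omega> \<mu>)\<^sup>2" if "?m \<le> R" for R
    using radicands_nonneg_iff[OF n kpos ratio_le] that by blast
  show ?thesis
  proof
    assume no_root: "\<not> (\<exists>R. positive_root n \<sigma> k \<omega> R)"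
    show "\<forall>R. ?m \<le> R \<longrightarrow> ?f R < 0"
    proof (intro allI impI, rule ccontr)
      fix R assume R: "?m \<le> R" and "\<not> ?f R < 0"
      have "0 \<le> R"
        using R zero_le_power2[of "\<omega> n / k n"] by linarith
      then obtain R' where "R \<le> R'" "?f R' < 0"
        using f_sigma_eventually_negative[OF kpos sig] radicands R by (meson order.trans)
      moreover have "0 \<le> ?f R" using \<open>\<not> ?f R < 0\<close> by simp
      ultimately obtain x where "R \<le> x" "?f x = 0"
        using IVT2'[of ?f R' 0 R] continuous_on_f_sigma by auto
      then show False using no_root roots R by auto
    qed
  qed (use roots in force)
qed

end
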